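(* Let $r\in\mathbb{N}$ and let $H=\begin{bmatrix}A&B\\C&D\end{bmatrix}$ with $A,B,C,D\in\mathbb{R}^{r\times r}$, where $A$ and $D$ are upper-triangular with diagonal entries $a_1,\dots,a_r$ and $d_1,\dots,d_r$ respectively, and $B$ and $C$ are diagonal with diagonal entries $b_1,\dots,b_r$ and $c_1,\dots,c_r$ respectively. If for every $i\in\{1,\dots,r\}$ the $2\times2$ matrix $\begin{bmatrix}a_i&b_i\\c_i&d_i\end{bmatrix}$ is stable, then $H$ is stable.
   Context: A square matrix is stable if all its eigenvalues have modulus strictly less than $1$. *)

theory Defs
  imports "Jordan_Normal_Form.Matrix" "Jordan_Normal_Form.Char_Poly" "HOL-Analysis.Analysis"
begin

definition stable :: "real mat \<Rightarrow> bool" where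
  "stable M \<longleftrightarrow> square_mat M \<and>
     (\<forall>k::complex. eigenvalue (map_mat complex_of_real M) k \<longrightarrow> cmod k < 1)"

end

theory Submission
  imports Defs
begin

text \<open>Write an eigenvector of \<open>H\<close> for \<open>k\<close> as \<open>x @ y\<close> with \<open>x, y \<in> \<complex>\<^sup>r\<close>, and let \<open>i\<close>
  be the largest index with \<open>(x\<^sub>i, y\<^sub>i) \<noteq> 0\<close>. Because \<open>A\<close> and \<open>D\<close> are upper triangular,
  \<open>B\<close> and \<open>C\<close> are diagonal, and all later entries of \<open>x\<close> and \<open>y\<close> vanish, rows \<open>i\<close> and
  \<open>r + i\<close> of \<open>H (x @ y) = k (x @ y)\<close> say exactly that \<open>(x\<^sub>i, y\<^sub>i)\<close> is an eigenvector of
  the \<open>i\<close>-th \<open>2 \<times> 2\<close> matrix for \<open>k\<close>. So every eigenvalue of \<open>H\<close> is an eigenvalue of one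
  of these stable matrices.\<close>

unbundle no vec_syntax

lemma index_mult_mat_vec_single:
  fixes A :: "'a :: semiring_0 mat"
  assumes "A \<in> carrier_mat n n" "v \<in> carrier_vec n" "i < n"
    and "\<And>j. j < n \<Longrightarrow> j \<noteq> i \<Longrightarrow> A $$ (i,j) * v $ j = 0"
  shows "(A *\<^sub>v v) $ i = A $$ (i,i) * v $ i"
proof -
  have "(A *\<^sub>v v) $ i = (\<Sum>j\<in>{0..<n}. A $$ (i,j) * v $ j)"
    using assms(1-3) by (simp add: scalar_prod_def)
  also have "\<dots> = (\<Sum>j\<in>{0..<n}. if j = i then A $$ (i,i) * v $ i else 0)"
    using assms(4) by (intro sum.cong) auto
  also have "\<dots> = A $$ (i,i) * v $ i"
    using assms(3) by simp
  finally show ?thesis .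
qed

lemma upper_triangular_index_mult_mat_vec:
  fixes A :: "'a :: semiring_0 mat"
  assumes "A \<in> carrier_mat n n" "upper_triangular A" "v \<in> carrier_vec n" "i < n"
    and "\<And>j. i < j \<Longrightarrow> j < n \<Longrightarrow> v $ j = 0"
  shows "(A *\<^sub>v v) $ i = A $$ (i,i) * v $ i"
  using assms upper_triangularD[OF assms(2)]
  by (intro index_mult_mat_vec_single) (auto simp: linorder_neq_iff)

lemma diagonal_index_mult_mat_vec:
  fixes A :: "'a :: semiring_0 mat"
  assumes "A \<in> carrier_mat n n" "diagonal_mat A" "v \<in> carrier_vec n" "i < n"
  shows "(A *\<^sub>v v) $ i = A $$ (i,i) * v $ i"
  using assms by (intro index_mult_mat_vec_single) (auto simp: diagonal_mat_def)

lemma smult_append_vec: "k \<cdot>\<^sub>v (x @\<^sub>v y) = (k \<cdot>\<^sub>v x) @\<^sub>v (k \<cdot>\<^sub>v y)"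
  by (rule eq_vecI) auto

lemma eigenvalue_mat_of_rows_list_2:
  fixes a b c d k x y :: "'a :: comm_ring_1"
  assumes "x \<noteq> 0 \<or> y \<noteq> 0" "a * x + b * y = k * x" "c * x + d * y = k * y"
  shows "eigenvalue (mat_of_rows_list 2 [[a, b], [c, d]]) k"
proof -
  let ?M = "mat_of_rows_list 2 [[a, b], [c, d]]" and ?w = "vec_of_list [x, y]"
  have "?M *\<^sub>v ?w = k \<cdot>\<^sub>v ?w"
  proof (rule eq_vecI)
    fix j assume "j < dim_vec (k \<cdot>\<^sub>v ?w)"
    then have "j = 0 \<or> j = 1" by auto
    then show "(?M *\<^sub>v ?w) $ j = (k \<cdot>\<^sub>v ?w) $ j"
      using assms(2,3) by (auto simp: mat_of_rows_list_def scalar_prod_def numeral_2_eq_2)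
  qed (simp add: mat_of_rows_list_def)
  moreover have "?w \<noteq> 0\<^sub>v 2"
  proof
    assume "?w = 0\<^sub>v 2"
    then have "?w $ 0 = 0" "?w $ 1 = 0" by auto
    then show False using assms(1) by simp
  qed
  moreover have "dim_row ?M = 2"
    by (simp add: mat_of_rows_list_def)
  moreover have "?w \<in> carrier_vec 2"
    by (rule carrier_vecI) simp
  ultimately show ?thesis
    unfolding eigenvalue_def eigenvector_def by metis
qed

lemma append_vec_last_nonzero_index:
  fixes x y :: "'a :: zero Matrix.vec"
  assumes "x \<in> carrier_vec n" "y \<in> carrier_vec n" "x @\<^sub>v y \<noteq> 0\<^sub>v (n + n)"
  obtains i where "i < n" "x $ i \<noteq> 0 \<or> y $ i \<noteq> 0"
    "\<And>j. i < j \<Longrightarrow> j < n \<Longrightarrow> x $ j = 0" "\<And>j. i < j \<Longrightarrow> j < n \<Longrightarrow> y $ j = 0"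
proof -
  define S where "S = {j. j < n \<and> (x $ j \<noteq> 0 \<or> y $ j \<noteq> 0)}"
  define i where "i = Max S"
  have "finite S"
    by (simp add: S_def)
  obtain j0 where "j0 < n + n" "(x @\<^sub>v y) $ j0 \<noteq> 0"
    using assms append_carrier_vec[OF assms(1,2)]
    by (metis carrier_vecD eq_vecI index_zero_vec(1,2))
  then have "(if j0 < n then j0 else j0 - n) \<in> S"
    using assms(1,2) by (auto simp: S_def)
  then have "i \<in> S"
    unfolding i_def using \<open>finite S\<close> by (intro Max_in) auto
  then have "i < n" "x $ i \<noteq> 0 \<or> y $ i \<noteq> 0"
    by (simp_all add: S_def)
  moreover have "x $ j = 0" "y $ j = 0" if "i < j" "j < n" for j
  proof -
    have "j \<notin> S"
      using that(1) Max_ge[OF \<open>finite S\<close>, of j] unfolding i_def by linarith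
    then show "x $ j = 0" "y $ j = 0"
      using that(2) by (simp_all add: S_def)
  qed
  ultimately show thesis
    by (rule that)
qed

lemma eigenvalue_four_block_triangular_diagonal:
  fixes A B C D :: "'a :: comm_ring_1 mat"
  assumes carrier: "A \<in> carrier_mat n n" "B \<in> carrier_mat n n"
      "C \<in> carrier_mat n n" "D \<in> carrier_mat n n"
    and "upper_triangular A" "upper_triangular D" "diagonal_mat B" "diagonal_mat C"
    and "eigenvalue (four_block_mat A B C D) k"
  obtains i where "i < n"
    "eigenvalue (mat_of_rows_list 2 [[A $$ (i,i), B $$ (i,i)], [C $$ (i,i), D $$ (i,i)]]) k"
proof -
  obtain v where v: "v \<in> carrier_vec (n + n)" "v \<noteq> 0\<^sub>v (n + n)"
      "four_block_mat A B C D *\<^sub>v v = k \<cdot>\<^sub>v v"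
    using assms(1,4,9) by (auto simp: eigenvalue_def eigenvector_def)
  define x y where "x = vec_first v n" and "y = vec_last v n"
  have xy: "x \<in> carrier_vec n" "y \<in> carrier_vec n" and v_eq: "v = x @\<^sub>v y"
    using v(1) by (simp_all add: x_def y_def)
  have eqs: "A *\<^sub>v x + B *\<^sub>v y = k \<cdot>\<^sub>v x" "C *\<^sub>v x + D *\<^sub>v y = k \<cdot>\<^sub>v y"
    using v(3) xy carrier
    by (simp_all add: v_eq four_block_mat_mult_vec smult_append_vec append_vec_eq[of _ n])
  obtain i where i: "i < n" and nonzero: "x $ i \<noteq> 0 \<or> y $ i \<noteq> 0"
    and zero: "\<And>j. i < j \<Longrightarrow> j < n \<Longrightarrow> x $ j = 0" "\<And>j. i < j \<Longrightarrow> j < n \<Longrightarrow> y $ j = 0"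
    using append_vec_last_nonzero_index[OF xy] v(2) v_eq by blast
  have top: "A $$ (i,i) * x $ i + B $$ (i,i) * y $ i = k * x $ i"
    using arg_cong[OF eqs(1), of "\<lambda>w. w $ i"] i xy carrier
      upper_triangular_index_mult_mat_vec[OF carrier(1) assms(5) xy(1) i zero(1)]
      diagonal_index_mult_mat_vec[OF carrier(2) assms(7) xy(2) i]
    by (simp del: index_mult_mat_vec)
  have bottom: "C $$ (i,i) * x $ i + D $$ (i,i) * y $ i = k * y $ i"
    using arg_cong[OF eqs(2), of "\<lambda>w. w $ i"] i xy carrier
      diagonal_index_mult_mat_vec[OF carrier(3) assms(8) xy(1) i]
      upper_triangular_index_mult_mat_vec[OF carrier(4) assms(6) xy(2) i zero(2)]
    by (simp del: index_mult_mat_vec)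
  show thesis
    by (rule that[OF i eigenvalue_mat_of_rows_list_2[OF nonzero top bottom]])
qed

lemma upper_triangular_map_mat:
  "A \<in> carrier_mat n n \<Longrightarrow> f 0 = 0 \<Longrightarrow> upper_triangular A \<Longrightarrow> upper_triangular (map_mat f A)"
  by (auto simp: upper_triangular_def)

lemma diagonal_mat_map_mat:
  "f 0 = 0 \<Longrightarrow> diagonal_mat A \<Longrightarrow> diagonal_mat (map_mat f A)"
  by (auto simp: diagonal_mat_def)

lemma map_mat_of_rows_list_2:
  "map_mat f (mat_of_rows_list 2 [[a, b], [c, d]]) = mat_of_rows_list 2 [[f a, f b], [f c, f d]]"
  by (rule eq_matI) (auto simp: mat_of_rows_list_def less_Suc_eq numeral_2_eq_2)

theorem lemma5:
  fixes r :: nat and A B C D :: "real mat"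
  assumes "A \<in> carrier_mat r r" "B \<in> carrier_mat r r"
    and "C \<in> carrier_mat r r" "D \<in> carrier_mat r r"
    and "upper_triangular A" "upper_triangular D"
    and "diagonal_mat B" "diagonal_mat C"
    and "\<forall>i<r. stable (mat_of_rows_list 2 [[A $$ (i,i), B $$ (i,i)], [C $$ (i,i), D $$ (i,i)]])"
  shows "stable (four_block_mat A B C D)"
proof -
  let ?c = "map_mat complex_of_real"
  have "cmod k < 1" if "eigenvalue (?c (four_block_mat A B C D)) k" for k
  proof -
    have ev: "eigenvalue (four_block_mat (?c A) (?c B) (?c C) (?c D)) k"
      using that assms(1-4) by (simp add: map_four_block_mat)
    have "?c A \<in> carrier_mat r r" "?c B \<in> carrier_mat r r"
        "?c C \<in> carrier_mat r r" "?c D \<in> carrier_mat r r"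
        "upper_triangular (?c A)" "upper_triangular (?c D)"
        "diagonal_mat (?c B)" "diagonal_mat (?c C)"
      using assms(1-8) by (auto intro: upper_triangular_map_mat diagonal_mat_map_mat)
    from this ev obtain i where "i < r"
      "eigenvalue (mat_of_rows_list 2
         [[?c A $$ (i,i), ?c B $$ (i,i)], [?c C $$ (i,i), ?c D $$ (i,i)]]) k"
      by (rule eigenvalue_four_block_triangular_diagonal)
    then have "eigenvalue (?c (mat_of_rows_list 2
        [[A $$ (i,i), B $$ (i,i)], [C $$ (i,i), D $$ (i,i)]])) k"
      using assms(1-4) by (simp add: map_mat_of_rows_list_2)
    then show ?thesis
      using assms(9) \<open>i < r\<close> unfolding stable_def by blast
  qed
  then show ?thesis
    using assms(1,4) by (auto simp: stable_def)
qed

end
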